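(* There exists a set $\mathcal X$ of four points in $\mathbb R^3$ (with Euclidean distance) having a perfect $2$-clustering $\mathcal C=\{C_1,C_2\}$ that is a global minimizer of the $2$-means cost, i.e. $\sum_{i=1}^2\sum_{x\in C_i}\|x-\mu(C_i)\|^2\le \sum_{i=1}^2\sum_{x\in C_i'}\|x-\mu(C_i')\|^2$ for every $2$-clustering $\{C_1',C_2'\}$ of $\mathcal X$ (where $\mu(C)$ is the mean of $C$), but such that for every ordering of the four points, the final centers produced by sequential $2$-means run on that ordering do not induce $\mathcal C$ on $\mathcal X$.
   Context: A clustering of $\mathcal X$ is a set of nonempty, pairwise disjoint subsets whose union is $\mathcal X$; a $k$-clustering has exactly $k$ clusters. Write $x\sim_{\mathcal C}y$ if $x,y$ are in the same cluster and $x\not\sim_{\mathcal C}y$ otherwise. $\mathcal C$ is perfect if $\|x-y\|<\|w-z\|$ whenever $x\sim_{\mathcal C}y$ and $w\not\sim_{\mathcal C}z$. A list of points $T=(t_1,\ldots,t_m)$ induces the clustering of $\mathcal X$ in which each $x$ is assigned to the index $i$ minimizing $\|x-t_i\|$ (ties broken by smallest $i$), empty clusters discarded. Sequential $k$-means on input sequence $x_1,\ldots,x_N$ in $\mathbb R^p$ ($N\ge k$): set $t_i=x_i$ and $n_i=1$ for $i=1,\ldots,k$; then for each subsequent point $x$: let $i$ be the index of the closest center $t_i$ to $x$ (ties broken by smallest index), increment $n_i$, and replace $t_i$ by $t_i+(1/n_i)(x-t_i)$. The output is the final list $(t_1,\ldots,t_k)$. *)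

theory Defs
  imports "HOL-Analysis.Analysis"
begin

definition is_clustering :: "'a set \<Rightarrow> 'a set set \<Rightarrow> bool" where
  "is_clustering X C \<longleftrightarrow> (\<forall>c\<in>C. c \<noteq> {}) \<and>
     (\<forall>c\<in>C. \<forall>d\<in>C. c \<noteq> d \<longrightarrow> c \<inter> d = {}) \<and> \<Union>C = X"

definition same_cluster :: "'a set set \<Rightarrow> 'a \<Rightarrow> 'a \<Rightarrow> bool" where
  "same_cluster C x y \<longleftrightarrow> (\<exists>c\<in>C. x \<in> c \<and> y \<in> c)"

definition perfect_clustering :: "'a::metric_space set \<Rightarrow> 'a set set \<Rightarrow> bool" where
  "perfect_clustering X C \<longleftrightarrow>
     (\<forall>x\<in>X. \<forall>y\<in>X. \<forall>w\<in>X. \<forall>z\<in>X.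
        same_cluster C x y \<and> \<not> same_cluster C w z \<longrightarrow> dist x y < dist w z)"

definition cmean :: "'a::real_vector set \<Rightarrow> 'a" where
  "cmean c = (1 / real (card c)) *\<^sub>R (\<Sum>x\<in>c. x)"

definition kmeans_cost :: "'a::real_normed_vector set set \<Rightarrow> real" where
  "kmeans_cost C = (\<Sum>c\<in>C. \<Sum>x\<in>c. (norm (x - cmean c))\<^sup>2)"

definition closest_idx :: "'a::real_normed_vector list \<Rightarrow> 'a \<Rightarrow> nat" where
  "closest_idx T x = (LEAST i. i < length T \<and>
      (\<forall>j<length T. norm (x - T ! i) \<le> norm (x - T ! j)))"

definition induced_clustering :: "'a::real_normed_vector set \<Rightarrow> 'a list \<Rightarrow> 'a set set" where
  "induced_clustering X T =
     (\<lambda>i. {x\<in>X. closest_idx T x = i}) ` {..<length T} - {{}}"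

definition seq_step :: "'a::real_normed_vector list \<times> nat list \<Rightarrow> 'a \<Rightarrow> 'a list \<times> nat list" where
  "seq_step s x = (let T = fst s; n = snd s; i = closest_idx T x; ni = n ! i + 1
     in (T[i := T ! i + (1 / real ni) *\<^sub>R (x - T ! i)], n[i := ni]))"

text \<open>Sequential k-means on the input sequence xs (assumed length xs \<ge> k).\<close>
definition seq_kmeans :: "nat \<Rightarrow> 'a::real_normed_vector list \<Rightarrow> 'a list" where
  "seq_kmeans k xs = fst (foldl seq_step (take k xs, replicate k 1) (drop k xs))"

end

theory Submission
  imports Defs
begin

(*
  The witness is X = {a, b, c, d} in R^3 with a = (2,0,0), b = (-2,0,0),
  c = (0,2,3), d = (0,-2,3) and the clustering C = {{a,b},{c,d}}.

  1. C is perfect: distances inside a cluster are 4, across clusters sqrt 17.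
  2. C minimises the 2-means cost.  For any finite point set, the identity
     sum_{x,y in c} |x-y|^2 = 2 |c| sum_{x in c} |x - mean c|^2 shows that a
     cluster c costs at least (|c| - 1) L / 2 when all squared distances are
     at least L; summing over the clusters, every k-clustering of X costs at
     least (|X| - k) L / 2.  Here L = 16 and C attains the bound 16.
  3. Sequential 2-means never recovers C.  With two centers, the induced
     clustering is determined by the predicate "nearer to the first center";
     C is induced only if this predicate separates {a,b} from {c,d}.  The
     24 orderings of X are enumerated and each run is evaluated symbolically;
     in no case do the final centers separate the pairs.
*)

definition vec3 :: "real \<Rightarrow> real \<Rightarrow> real \<Rightarrow> real^3" where
  "vec3 x y z = vector [x, y, z]"

lemma vec3_eq_iff [simp]: "vec3 a b c = vec3 d e f \<longleftrightarrow> a = d \<and> b = e \<and> c = f"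
  by (auto simp: vec3_def vec_eq_iff forall_3)

lemma vec3_diff [simp]: "vec3 a b c - vec3 d e f = vec3 (a - d) (b - e) (c - f)"
  by (simp add: vec3_def vec_eq_iff forall_3)

lemma vec3_add [simp]: "vec3 a b c + vec3 d e f = vec3 (a + d) (b + e) (c + f)"
  by (simp add: vec3_def vec_eq_iff forall_3)

lemma vec3_scaleR [simp]: "r *\<^sub>R vec3 a b c = vec3 (r * a) (r * b) (r * c)"
  by (simp add: vec3_def vec_eq_iff forall_3)

lemma vec3_eq_0_iff [simp]: "vec3 a b c = 0 \<longleftrightarrow> a = 0 \<and> b = 0 \<and> c = 0"
  by (auto simp: vec3_def vec_eq_iff forall_3)

lemma norm_vec3_sq [simp]: "(norm (vec3 a b c))\<^sup>2 = a\<^sup>2 + b\<^sup>2 + c\<^sup>2"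
  unfolding power2_norm_eq_inner by (simp add: vec3_def inner_vec_def sum_3 power2_eq_square)

lemma norm_vec3_le_iff [simp]:
  "norm (vec3 a b c) \<le> norm (vec3 d e f) \<longleftrightarrow> a\<^sup>2 + b\<^sup>2 + c\<^sup>2 \<le> d\<^sup>2 + e\<^sup>2 + f\<^sup>2"
  by (metis norm_ge_zero norm_vec3_sq power2_le_iff_abs_le abs_norm_cancel)

lemma norm_vec3_less_iff [simp]:
  "norm (vec3 a b c) < norm (vec3 d e f) \<longleftrightarrow> a\<^sup>2 + b\<^sup>2 + c\<^sup>2 < d\<^sup>2 + e\<^sup>2 + f\<^sup>2"
  by (meson norm_vec3_le_iff not_le)

lemma sum_pairwise_dist_sq:
  fixes c :: "'a::real_inner set"
  assumes "finite c" "c \<noteq> {}"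
  shows "(\<Sum>x\<in>c. \<Sum>y\<in>c. (norm (x - y))\<^sup>2)
           = 2 * real (card c) * (\<Sum>x\<in>c. (norm (x - cmean c))\<^sup>2)"
proof -
  define m where "m = cmean c"
  have "real (card c) \<noteq> 0" using assms by simp
  then have centered: "(\<Sum>y\<in>c. y - m) = 0"
    by (simp add: sum_subtractf m_def cmean_def sum_constant_scaleR)
  then have cross: "(\<Sum>y\<in>c. (x - m) \<bullet> (y - m)) = 0" for x
    by (metis inner_sum_right inner_zero_right)
  have expand: "(norm (x - y))\<^sup>2 = (norm (x - m))\<^sup>2 + (norm (y - m))\<^sup>2 - 2 * ((x - m) \<bullet> (y - m))"
    for x y
    using dot_norm_neg[of "x - m" "y - m"] by simp
  have "(\<Sum>x\<in>c. \<Sum>y\<in>c. (norm (x - y))\<^sup>2)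
      = (\<Sum>x\<in>c. \<Sum>y\<in>c. (norm (x - m))\<^sup>2 + (norm (y - m))\<^sup>2 - 2 * ((x - m) \<bullet> (y - m)))"
    by (intro sum.cong refl expand)
  also have "\<dots> = (\<Sum>x\<in>c. real (card c) * (norm (x - m))\<^sup>2 + (\<Sum>y\<in>c. (norm (y - m))\<^sup>2)
                  - 2 * (\<Sum>y\<in>c. (x - m) \<bullet> (y - m)))"
    by (simp add: sum.distrib sum_subtractf sum_distrib_left)
  also have "\<dots> = 2 * real (card c) * (\<Sum>x\<in>c. (norm (x - m))\<^sup>2)"
    by (simp add: cross sum.distrib sum_distrib_left[symmetric])
  finally show ?thesis by (simp add: m_def)
qed

lemma cluster_cost_lower_bound:
  fixes c :: "'a::real_inner set"
  assumes "finite c" "c \<noteq> {}"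
    and sep: "\<forall>x\<in>c. \<forall>y\<in>c. x \<noteq> y \<longrightarrow> L \<le> (norm (x - y))\<^sup>2"
  shows "(real (card c) - 1) * L / 2 \<le> (\<Sum>x\<in>c. (norm (x - cmean c))\<^sup>2)"
proof -
  have card_pos: "0 < card c" using assms(1,2) by (simp add: card_gt_0_iff)
  have row: "(real (card c) - 1) * L \<le> (\<Sum>y\<in>c. (norm (x - y))\<^sup>2)" if x: "x \<in> c" for x
  proof -
    have "(real (card c) - 1) * L = (\<Sum>y\<in>c - {x}. L)"
      using x assms(1) card_pos by (simp add: card_Diff_singleton of_nat_diff)
    also have "\<dots> \<le> (\<Sum>y\<in>c - {x}. (norm (x - y))\<^sup>2)"
      using sep x by (intro sum_mono) auto
    also have "\<dots> = (\<Sum>y\<in>c. (norm (x - y))\<^sup>2)"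
      using x assms(1) by (simp add: sum.remove)
    finally show ?thesis .
  qed
  have "real (card c) * ((real (card c) - 1) * L) = (\<Sum>x\<in>c. (real (card c) - 1) * L)"
    by simp
  also have "\<dots> \<le> (\<Sum>x\<in>c. \<Sum>y\<in>c. (norm (x - y))\<^sup>2)"
    using row by (rule sum_mono)
  also have "\<dots> = real (card c) * (2 * (\<Sum>x\<in>c. (norm (x - cmean c))\<^sup>2))"
    using sum_pairwise_dist_sq[OF assms(1,2)] by simp
  finally show ?thesis
    using card_pos by (simp add: mult_le_cancel_left_pos)
qed

lemma kmeans_cost_lower_bound:
  fixes X :: "'a::real_inner set"
  assumes cl: "is_clustering X C" and "finite X"
    and sep: "\<forall>x\<in>X. \<forall>y\<in>X. x \<noteq> y \<longrightarrow> L \<le> (norm (x - y))\<^sup>2"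
  shows "(real (card X) - real (card C)) * L / 2 \<le> kmeans_cost C"
proof -
  have ne: "\<forall>c\<in>C. c \<noteq> {}" and disj: "\<forall>c\<in>C. \<forall>d\<in>C. c \<noteq> d \<longrightarrow> c \<inter> d = {}"
    and union: "\<Union>C = X" using cl by (auto simp: is_clustering_def)
  have fin_cluster: "\<And>c. c \<in> C \<Longrightarrow> finite c"
    using union \<open>finite X\<close> by (metis Union_upper finite_subset)
  have "card X = (\<Sum>c\<in>C. card c)" unfolding union[symmetric]
    by (rule card_Union_disjoint) (use disj fin_cluster in \<open>auto simp: pairwise_def disjnt_def\<close>)
  then have "(real (card X) - real (card C)) * L / 2 = (\<Sum>c\<in>C. (real (card c) - 1) * L / 2)"
    by (simp add: sum_subtractf sum_divide_distrib[symmetric] sum_distrib_right[symmetric])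
  also have "\<dots> \<le> kmeans_cost C" unfolding kmeans_cost_def
    using fin_cluster ne sep union by (intro sum_mono cluster_cost_lower_bound) auto
  finally show ?thesis .
qed

lemma length_seq_kmeans:
  assumes "k \<le> length xs"
  shows "length (seq_kmeans k xs) = k"
proof -
  have "length (fst (foldl seq_step s ys)) = length (fst s)" for s and ys :: "'a list"
    by (induction ys arbitrary: s) (simp_all add: seq_step_def Let_def)
  then show ?thesis using assms by (simp add: seq_kmeans_def)
qed

definition nearer_first :: "'a::real_normed_vector list \<Rightarrow> 'a \<Rightarrow> bool" where
  "nearer_first T x \<longleftrightarrow> norm (x - T ! 0) \<le> norm (x - T ! 1)"

lemma closest_idx_two:
  assumes "length T = 2"
  shows "closest_idx T x = (if nearer_first T x then 0 else 1)"
  using assms unfolding closest_idx_def nearer_first_def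
  by (intro Least_equality) (auto simp: less_Suc_eq numeral_2_eq_2)

lemma seq_step_two:
  "seq_step ([t0, t1], [n0, n1]) x =
     (if norm (x - t0) \<le> norm (x - t1)
      then ([t0 + (1 / real (n0 + 1)) *\<^sub>R (x - t0), t1], [n0 + 1, n1])
      else ([t0, t1 + (1 / real (n1 + 1)) *\<^sub>R (x - t1)], [n0, n1 + 1]))"
  by (simp add: seq_step_def closest_idx_two nearer_first_def Let_def)

lemma seq_kmeans_two_four:
  "seq_kmeans 2 [p1, p2, p3, p4] = fst (seq_step (seq_step ([p1, p2], [1, 1]) p3) p4)"
  by (simp add: seq_kmeans_def numeral_2_eq_2)

lemma induced_clustering_two:
  assumes "length T = 2"
  shows "induced_clustering X T = {{x\<in>X. nearer_first T x}, {x\<in>X. \<not> nearer_first T x}} - {{}}"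
proof -
  have indices: "{..<length T} = {0, 1}" using assms by auto
  have "{x\<in>X. closest_idx T x = 0} = {x\<in>X. nearer_first T x}"
    and "{x\<in>X. closest_idx T x = 1} = {x\<in>X. \<not> nearer_first T x}"
    by (auto simp: closest_idx_two[OF assms])
  then show ?thesis
    unfolding induced_clustering_def indices by (simp only: image_insert image_empty)
qed

lemma induced_two_centers_pairs:
  assumes "length T = 2" "distinct [a, b, c, d]"
    and induced: "induced_clustering {a, b, c, d} T = {{a, b}, {c, d}}"
  shows "nearer_first T a = nearer_first T b \<and> nearer_first T c = nearer_first T d
           \<and> nearer_first T a \<noteq> nearer_first T c"
proof -
  let ?X = "{a, b, c, d}" and ?Q = "nearer_first T"
  have "{a, b} \<in> induced_clustering ?X T" using induced by simp
  then have "{a, b} = {x\<in>?X. ?Q x} \<or> {a, b} = {x\<in>?X. \<not> ?Q x}"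
    unfolding induced_clustering_two[OF assms(1)] by blast
  then show ?thesis
  proof
    assume ab: "{a, b} = {x\<in>?X. ?Q x}"
    have "a \<in> {x\<in>?X. ?Q x}" "b \<in> {x\<in>?X. ?Q x}" using ab by auto
    moreover have "c \<notin> {x\<in>?X. ?Q x}" "d \<notin> {x\<in>?X. ?Q x}" using ab assms(2) by auto
    ultimately show ?thesis by auto
  next
    assume ab: "{a, b} = {x\<in>?X. \<not> ?Q x}"
    have "a \<in> {x\<in>?X. \<not> ?Q x}" "b \<in> {x\<in>?X. \<not> ?Q x}" using ab by auto
    moreover have "c \<notin> {x\<in>?X. \<not> ?Q x}" "d \<notin> {x\<in>?X. \<not> ?Q x}" using ab assms(2) by auto
    ultimately show ?thesis by auto
  qed
qed

lemma orderings_of_four: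
  assumes "distinct xs" "set xs = {a, b, c, d}" "distinct [a, b, c, d]"
  shows "xs \<in> {[a,b,c,d], [a,b,d,c], [a,c,b,d], [a,c,d,b], [a,d,b,c], [a,d,c,b],
                [b,a,c,d], [b,a,d,c], [b,c,a,d], [b,c,d,a], [b,d,a,c], [b,d,c,a],
                [c,a,b,d], [c,a,d,b], [c,b,a,d], [c,b,d,a], [c,d,a,b], [c,d,b,a],
                [d,a,b,c], [d,a,c,b], [d,b,a,c], [d,b,c,a], [d,c,a,b], [d,c,b,a]}"
proof -
  have "length xs = 4" using assms distinct_card by fastforce
  then obtain x1 x2 x3 x4 where xs: "xs = [x1, x2, x3, x4]"
    by (auto simp: length_Suc_conv numeral_eq_Suc)
  have "x1 \<in> {a, b, c, d}" "x2 \<in> {a, b, c, d}" "x3 \<in> {a, b, c, d}" "x4 \<in> {a, b, c, d}"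
    using assms(2) unfolding xs by auto
  moreover have "distinct [x1, x2, x3, x4]" using assms(1) xs by simp
  ultimately show ?thesis using assms(3) unfolding xs insert_iff empty_iff
    by (elim disjE) simp_all
qed

abbreviation "pa \<equiv> vec3 2 0 0"
abbreviation "pb \<equiv> vec3 (-2) 0 0"
abbreviation "pc \<equiv> vec3 0 2 3"
abbreviation "pd \<equiv> vec3 0 (-2) 3"

lemma example_distinct: "distinct [pa, pb, pc, pd]"
  by simp

lemma example_is_clustering: "is_clustering {pa, pb, pc, pd} {{pa, pb}, {pc, pd}}"
  unfolding is_clustering_def by auto

lemma example_card_clusters: "card {{pa, pb}, {pc, pd}} = 2"
  by (simp add: doubleton_eq_iff)

text \<open>Within-pair distance 4, cross distance sqrt 17.\<close>

lemma example_perfect: "perfect_clustering {pa, pb, pc, pd} {{pa, pb}, {pc, pd}}"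
  unfolding perfect_clustering_def same_cluster_def dist_norm
  by (simp add: power2_eq_square)

text \<open>Each pair costs 8, which matches the lower bound (4 - 2) 16 / 2.\<close>

lemma example_optimal:
  assumes "is_clustering {pa, pb, pc, pd} C'" "card C' = 2"
  shows "kmeans_cost {{pa, pb}, {pc, pd}} \<le> kmeans_cost C'"
proof -
  have "\<forall>x\<in>{pa, pb, pc, pd}. \<forall>y\<in>{pa, pb, pc, pd}. x \<noteq> y \<longrightarrow> 16 \<le> (norm (x - y))\<^sup>2"
    by simp
  then have "(real (card {pa, pb, pc, pd}) - 2) * 16 / 2 \<le> kmeans_cost C'"
    using kmeans_cost_lower_bound[OF assms(1)] assms(2) by simp
  moreover have "kmeans_cost {{pa, pb}, {pc, pd}} = 16"
    by (simp add: kmeans_cost_def cmean_def doubleton_eq_iff)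
  ultimately show ?thesis by simp
qed

lemma example_runs_do_not_separate:
  assumes "distinct xs" "set xs = {pa, pb, pc, pd}"
  defines "Q \<equiv> nearer_first (seq_kmeans 2 xs)"
  shows "\<not> (Q pa = Q pb \<and> Q pc = Q pd \<and> Q pa \<noteq> Q pc)"
proof -
  let ?separates = "\<lambda>T. nearer_first T pa = nearer_first T pb \<and>
     nearer_first T pc = nearer_first T pd \<and> nearer_first T pa \<noteq> nearer_first T pc"
  have "\<forall>ys\<in>{[pa,pb,pc,pd], [pa,pb,pd,pc], [pa,pc,pb,pd], [pa,pc,pd,pb], [pa,pd,pb,pc],
      [pa,pd,pc,pb], [pb,pa,pc,pd], [pb,pa,pd,pc], [pb,pc,pa,pd], [pb,pc,pd,pa], [pb,pd,pa,pc],
      [pb,pd,pc,pa], [pc,pa,pb,pd], [pc,pa,pd,pb], [pc,pb,pa,pd], [pc,pb,pd,pa], [pc,pd,pa,pb],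
      [pc,pd,pb,pa], [pd,pa,pb,pc], [pd,pa,pc,pb], [pd,pb,pa,pc], [pd,pb,pc,pa], [pd,pc,pa,pb],
      [pd,pc,pb,pa]}. \<not> ?separates (seq_kmeans 2 ys)"
    by (simp add: seq_kmeans_two_four seq_step_two nearer_first_def power2_eq_square)
  then show ?thesis
    unfolding Q_def by (rule bspec) (rule orderings_of_four[OF assms(1,2) example_distinct])
qed

lemma example_seq_kmeans_fails:
  assumes "distinct xs" "set xs = {pa, pb, pc, pd}"
  shows "induced_clustering {pa, pb, pc, pd} (seq_kmeans 2 xs) \<noteq> {{pa, pb}, {pc, pd}}"
proof -
  have "length xs = 4" using assms example_distinct distinct_card by fastforce
  then have "length (seq_kmeans 2 xs) = 2" by (simp add: length_seq_kmeans)
  then show ?thesis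
    using induced_two_centers_pairs[OF _ example_distinct] example_runs_do_not_separate[OF assms]
    by blast
qed

theorem mainTheorem6:
  shows "\<exists>X :: (real^3) set. card X = 4 \<and>
    (\<exists>C. is_clustering X C \<and> card C = 2 \<and> perfect_clustering X C \<and>
       (\<forall>C'. is_clustering X C' \<and> card C' = 2 \<longrightarrow> kmeans_cost C \<le> kmeans_cost C') \<and>
       (\<forall>xs. distinct xs \<and> set xs = X \<longrightarrow> induced_clustering X (seq_kmeans 2 xs) \<noteq> C))"
proof (intro exI conjI allI impI)
  show "card {pa, pb, pc, pd} = 4" by simp
  show "is_clustering {pa, pb, pc, pd} {{pa, pb}, {pc, pd}}" by (rule example_is_clustering)
  show "card {{pa, pb}, {pc, pd}} = 2" by (rule example_card_clusters)
  show "perfect_clustering {pa, pb, pc, pd} {{pa, pb}, {pc, pd}}" by (rule example_perfect)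
  show "kmeans_cost {{pa, pb}, {pc, pd}} \<le> kmeans_cost C'"
    if "is_clustering {pa, pb, pc, pd} C' \<and> card C' = 2" for C'
    using that example_optimal by blast
  show "induced_clustering {pa, pb, pc, pd} (seq_kmeans 2 xs) \<noteq> {{pa, pb}, {pc, pd}}"
    if "distinct xs \<and> set xs = {pa, pb, pc, pd}" for xs
    using that example_seq_kmeans_fails by blast
qed

end
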